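(* Let $M\ge 3$, let $\pi\in\mathcal B_M$, and let $yz$ be an outer boundary edge of the triangular ladder $\mathscr L_\pi$. Then the backward extension graph $B_{\pi,yz}$ is balanced, i.e. $m_{B_{\pi,yz}}\ge m_K$ for every subextension $K$ of $B_{\pi,yz}$.
   Context: Extension graphs: a graph $H=(V_H,E_H)$ with an independent set $I_H\subseteq V_H$ of distinguished vertices; density $m_H=|E_H|/(|V_H|-|I_H|)$; a subextension $K$ of $H$ is an extension graph with $V_K\subseteq V_H$, $E_K\subseteq E_H$ and $I_K=I_H$. Words: $\Pi\subset\{\mathtt e,0,1\}^*$ is the set of words $\pi=\pi(1)\pi(2)\cdots$ that do not have the symbol $0$ at positions $1$ or $2$, have at most two occurrences of $\mathtt e$, and do not contain the substrings $\mathtt e0$, $\mathtt e10$, $\mathtt e1\mathtt e$. $\pi_\ell$ denotes the length-$\ell$ prefix and $\circ$ concatenation. Triangular ladder $\mathscr L_\pi$ ($|\pi|=k\ge1$), a graph on $\{0,1,\dots,k+1\}$: $\mathscr L_1$ has edges $02,12$; $\mathscr L_{\mathtt e}$ has the single edge $12$. For $k\ge2$, start from $\mathscr L_{\pi_{k-1}}$, add vertex $k+1$ and edge $(k,k+1)$; additionally if $\pi(k)=1$ add edge $(k-1,k+1)$, and if $\pi(k)=0$ add edge $(w,k+1)$ where $w$ is the unique neighbor of $k$ in $\mathscr L_{\pi_{k-1}}$ other than $k-1$. $f$-fan ($f\ge3$) at a vertex $a>0$: either $\pi(a-2)\ne\mathtt e$ and $\pi(a+1)=1$, $\pi(a+i)=0$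 for $2\le i\le f$; or $\pi(a-2)=\mathtt e$ and $\pi(a+1)=1$, $\pi(a+i)=0$ for $2\le i\le f-1$ (here $\pi(j)$ for $j\le 0$ is regarded as different from $\mathtt e$). $\mathcal B_M$ ($M\ge3$): the set of $\pi\in\Pi$ with no $M$-fan and satisfying one of: (a) $\pi$ has no $\mathtt e$ and $|\pi|\le 3M-1$; (b) $\pi$ has one $\mathtt e$, $|\pi|\le 2M$ and $\pi(2M)\ne\mathtt e$; (c) $\pi$ has two $\mathtt e$'s, $|\pi|\le M+1$ and $\pi(M+1)\ne\mathtt e$. Boundary edges: for $\pi\in\mathcal B_M$ and an edge $yz$ of $\mathscr L_\pi$ with $0<y<z$ and $\pi(y)\ne\mathtt e$, let $\pi'=\pi_{z-1}\circ0$ if $y<z-1$ and $\pi'=\pi_{z-1}\circ 1$ if $y=z-1$; $yz$ is a boundary edge if $\pi'\notin\mathcal B_M$. It is an outer boundary edge if moreover $z=|\pi|+1$ and $|\pi|$ equals $3M-1$, $2M$ or $M+1$ according as $\pi$ contains $0$, $1$ or $2$ copies of $\mathtt e$. Backward extension $B_{\pi,yz}$ (for an outer boundary edge $yz$): the extension graph obtained from $\mathscr L_\pi$ by deleting all edges with both endpoints in $I=\{0,1,y,z\}$, with distinguished vertex set $I$. *)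

theory Defs
  imports Complex_Main "HOL-Library.Sublist"
begin

text \<open>Letters: Le = e, L0 = 0, L1 = 1.\<close>
datatype sym = Le | L0 | L1

text \<open>1-indexed letter access; None outside positions 1..length.\<close>
definition pos :: "sym list \<Rightarrow> nat \<Rightarrow> sym option" where
  "pos \<pi> j = (if 1 \<le> j \<and> j \<le> length \<pi> then Some (\<pi> ! (j - 1)) else None)"

definition Pi_words :: "sym list set" where
  "Pi_words = {\<pi>. pos \<pi> 1 \<noteq> Some L0 \<and> pos \<pi> 2 \<noteq> Some L0 \<and> count_list \<pi> Le \<le> 2
      \<and> \<not> sublist [Le, L0] \<pi> \<and> \<not> sublist [Le, L1, L0] \<pi> \<and> \<not> sublist [Le, L1, Le] \<pi>}"

fun ladder_aux :: "sym list \<Rightarrow> nat \<Rightarrow> nat set set" where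
  "ladder_aux \<pi> 0 = {}"
| "ladder_aux \<pi> (Suc 0) = (if \<pi> ! 0 = Le then {{1, 2}} else {{0, 2}, {1, 2}})"
| "ladder_aux \<pi> (Suc (Suc j)) =
     (let k = Suc (Suc j); G = ladder_aux \<pi> (Suc j)
      in G \<union> {{k, k + 1}} \<union>
         (case \<pi> ! (k - 1) of
            L1 \<Rightarrow> {{k - 1, k + 1}}
          | L0 \<Rightarrow> {{THE w. {w, k} \<in> G \<and> w \<noteq> k - 1, k + 1}}
          | Le \<Rightarrow> {}))"

definition ladder :: "sym list \<Rightarrow> nat set set" where
  "ladder \<pi> = ladder_aux \<pi> (length \<pi>)"

definition ladder_vertices :: "sym list \<Rightarrow> nat set" where
  "ladder_vertices \<pi> = {0 .. length \<pi> + 1}"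

definition fan_at :: "sym list \<Rightarrow> nat \<Rightarrow> nat \<Rightarrow> bool" where
  "fan_at \<pi> f a \<longleftrightarrow> 0 < a \<and>
     ((pos \<pi> (a - 2) \<noteq> Some Le \<and> pos \<pi> (a + 1) = Some L1 \<and> (\<forall>i\<in>{2..f}. pos \<pi> (a + i) = Some L0))
    \<or> (pos \<pi> (a - 2) = Some Le \<and> pos \<pi> (a + 1) = Some L1 \<and> (\<forall>i\<in>{2..f - 1}. pos \<pi> (a + i) = Some L0)))"

definition B_set :: "nat \<Rightarrow> sym list set" where
  "B_set M = {\<pi>. \<pi> \<in> Pi_words \<and> \<not> (\<exists>a. fan_at \<pi> M a) \<and>
     ((count_list \<pi> Le = 0 \<and> length \<pi> \<le> 3 * M - 1)
    \<or> (count_list \<pi> Le = 1 \<and> length \<pi> \<le> 2 * M \<and> pos \<pi> (2 * M) \<noteq> Some Le)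
    \<or> (count_list \<pi> Le = 2 \<and> length \<pi> \<le> M + 1 \<and> pos \<pi> (M + 1) \<noteq> Some Le))}"

definition boundary_edge :: "nat \<Rightarrow> sym list \<Rightarrow> nat \<Rightarrow> nat \<Rightarrow> bool" where
  "boundary_edge M \<pi> y z \<longleftrightarrow> \<pi> \<in> B_set M \<and> {y, z} \<in> ladder \<pi> \<and> 0 < y \<and> y < z \<and>
     pos \<pi> y \<noteq> Some Le \<and>
     (let \<pi>' = take (z - 1) \<pi> @ [if y < z - 1 then L0 else L1] in \<pi>' \<notin> B_set M)"

definition outer_boundary_edge :: "nat \<Rightarrow> sym list \<Rightarrow> nat \<Rightarrow> nat \<Rightarrow> bool" where
  "outer_boundary_edge M \<pi> y z \<longleftrightarrow> boundary_edge M \<pi> y z \<and> z = length \<pi> + 1 \<and>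
     length \<pi> = (if count_list \<pi> Le = 0 then 3 * M - 1
                  else if count_list \<pi> Le = 1 then 2 * M else M + 1)"

definition ext_graph :: "nat set \<Rightarrow> nat set set \<Rightarrow> nat set \<Rightarrow> bool" where
  "ext_graph V Es I \<longleftrightarrow> finite V \<and>
     (\<forall>e\<in>Es. \<exists>u v. e = {u, v} \<and> u \<noteq> v \<and> u \<in> V \<and> v \<in> V) \<and>
     I \<subseteq> V \<and> (\<forall>e\<in>Es. \<not> e \<subseteq> I)"

definition density :: "nat set \<Rightarrow> nat set set \<Rightarrow> nat set \<Rightarrow> real" where
  "density V Es I = real (card Es) / (real (card V) - real (card I))"

definition subext :: "nat set \<Rightarrow> nat set set \<Rightarrow> nat set \<Rightarrow> nat set \<Rightarrow> nat set set \<Rightarrow> nat set \<Rightarrow> bool" where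
  "subext VK EK IK VH EH IH \<longleftrightarrow> ext_graph VK EK IK \<and> VK \<subseteq> VH \<and> EK \<subseteq> EH \<and> IK = IH"

definition balanced :: "nat set \<Rightarrow> nat set set \<Rightarrow> nat set \<Rightarrow> bool" where
  "balanced V Es I \<longleftrightarrow> ext_graph V Es I \<and>
     (\<forall>VK EK. subext VK EK I V Es I \<longrightarrow> density VK EK I \<le> density V Es I)"

definition bw_I :: "nat \<Rightarrow> nat \<Rightarrow> nat set" where
  "bw_I y z = {0, 1, y, z}"

definition bw_E :: "sym list \<Rightarrow> nat \<Rightarrow> nat \<Rightarrow> nat set set" where
  "bw_E \<pi> y z = {e \<in> ladder \<pi>. \<not> e \<subseteq> bw_I y z}"

end

theory Submission
  imports Defs
begin

text \<open>Let \<open>n = |\<pi>|\<close> and let c be the number of letters e; the shape of an outer boundary edge says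
  precisely that \<open>n + (M - 1) c = 3M - 1\<close>, which makes the density of the backward extension
  \<open>(2M - 1)/(M - 1)\<close>.
  Every vertex \<open>k + 1 \<ge> 2\<close> of the ladder has at most two lower neighbours. For a vertex set X
  containing the distinguished vertices, let s count the vertices \<open>k + 1 \<ge> 2\<close> of X and \<lambda> the
  lower neighbours of those vertices that are absent from X (the missing second neighbour after an
  e included); X then spans \<open>2s - \<lambda>\<close> edges, one of them yz, so balancedness reduces to
  \<open>s + (M - 1) \<lambda> \<ge> 3M - 1\<close>. This is trivial for \<open>\<lambda> \<ge> 3\<close>. For \<open>\<lambda> \<le> 2\<close> each vertex absent
  from X lies in the fan that ends at a vertex \<open>k + 1 \<in> X\<close> with \<open>k \<notin> X\<close>, and as there is no M-fan
  each such fan hides at most \<open>M - 1\<close> vertices; an e either costs a unit of \<lambda> directly or,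
  if the vertex after it is absent, forces the whole configuration to be so tight that
  \<open>n - s + (M - 1) c \<le> (M - 1) \<lambda>\<close> still holds.\<close>

text \<open>\<open>ladder_back p k\<close> is the lower neighbour of vertex k + 1 other than k, the vertex w of the
  paper's construction. Letters are 1-indexed in the paper, so \<open>\<pi>(k)\<close> is \<open>p ! (k - 1)\<close> throughout.\<close>
fun ladder_back :: "sym list \<Rightarrow> nat \<Rightarrow> nat" where
  "ladder_back p 0 = 0"
| "ladder_back p (Suc 0) = 0"
| "ladder_back p (Suc (Suc j)) = (if p ! Suc j = L0 then ladder_back p (Suc j) else Suc j)"

definition lower_nbrs :: "sym list \<Rightarrow> nat \<Rightarrow> nat set" where
  "lower_nbrs p k = (if p ! (k - 1) = Le then {k} else {k, ladder_back p k})"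

definition ladder_edges :: "sym list \<Rightarrow> nat \<Rightarrow> nat set set" where
  "ladder_edges p j = (\<Union>k\<in>{1..j}. (\<lambda>u. {u, Suc k}) ` lower_nbrs p k)"

lemma ladder_back_lt: "1 \<le> k \<Longrightarrow> ladder_back p k < k"
  by (induction p k rule: ladder_back.induct) auto

lemma ladder_back_Suc: "1 \<le> k \<Longrightarrow> ladder_back p (Suc k) = (if p ! k = L0 then ladder_back p k else k)"
  by (cases k) auto

lemma lower_nbrs_le: "1 \<le> k \<Longrightarrow> u \<in> lower_nbrs p k \<Longrightarrow> u \<le> k"
  using ladder_back_lt[of k p] by (auto simp: lower_nbrs_def split: if_splits)

lemma ladder_edges_Suc:
  "ladder_edges p (Suc j) = ladder_edges p j \<union> (\<lambda>u. {u, Suc (Suc j)}) ` lower_nbrs p (Suc j)"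
  unfolding ladder_edges_def by (simp add: atLeastAtMostSuc_conv Un_commute)

lemma doubleton_mem_ladder_edges_iff:
  assumes "1 \<le> j"
  shows "{w, Suc j} \<in> ladder_edges p j \<longleftrightarrow> w \<in> lower_nbrs p j"
proof
  assume "{w, Suc j} \<in> ladder_edges p j"
  then obtain k u where "1 \<le> k" "k \<le> j" "u \<in> lower_nbrs p k" "{w, Suc j} = {u, Suc k}"
    unfolding ladder_edges_def by auto
  moreover from this have "u \<noteq> Suc j" using lower_nbrs_le by fastforce
  ultimately show "w \<in> lower_nbrs p j" by (auto simp: doubleton_eq_iff)
next
  assume "w \<in> lower_nbrs p j"
  then show "{w, Suc j} \<in> ladder_edges p j"
    using assms unfolding ladder_edges_def by auto
qed

lemma ladder_aux_eq_ladder_edges: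
  assumes no_e0: "\<And>i. 1 \<le> i \<Longrightarrow> i < length p \<Longrightarrow> \<not> (p ! (i - 1) = Le \<and> p ! i = L0)"
    and "j \<le> length p"
  shows "ladder_aux p j = ladder_edges p j"
  using assms
proof (induction p j rule: ladder_aux.induct)
  case (1 p)
  then show ?case by (simp add: ladder_edges_def)
next
  case (2 p)
  then show ?case by (auto simp: ladder_edges_def lower_nbrs_def)
next
  case (3 p j)
  define k where "k = Suc (Suc j)"
  define C where "C = (case p ! (k - 1) of
            L1 \<Rightarrow> {{k - 1, k + 1}}
          | L0 \<Rightarrow> {{THE w. {w, k} \<in> ladder_edges p (Suc j) \<and> w \<noteq> k - 1, k + 1}}
          | Le \<Rightarrow> {})"
  have IH: "ladder_aux p (Suc j) = ladder_edges p (Suc j)"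
    using "3.IH"[OF refl "3.prems"(1)] "3.prems"(2) by simp
  have step: "ladder_aux p k = ladder_edges p (Suc j) \<union> {{k, k + 1}} \<union> C"
    unfolding C_def k_def by (simp add: Let_def IH)
  have new_edges: "C \<union> {{k, k + 1}} = (\<lambda>u. {u, Suc k}) ` lower_nbrs p k"
  proof (cases "p ! (k - 1)")
    case L0
    have "p ! j \<noteq> Le"
      using "3.prems"(1)[of "Suc j"] "3.prems"(2) L0 k_def by (simp add: Suc_le_eq)
    then have "(THE w. {w, k} \<in> ladder_edges p (Suc j) \<and> w \<noteq> k - 1) = ladder_back p (Suc j)"
      using ladder_back_lt[of "Suc j" p]
      by (auto simp: k_def doubleton_mem_ladder_edges_iff lower_nbrs_def)
    moreover have "ladder_back p k = ladder_back p (Suc j)" using L0 k_def by simp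
    ultimately show ?thesis using L0 by (auto simp: C_def lower_nbrs_def)
  qed (auto simp: C_def lower_nbrs_def k_def)
  have "ladder_edges p k = ladder_edges p (Suc j) \<union> (C \<union> {{k, k + 1}})"
    unfolding new_edges by (simp add: k_def ladder_edges_Suc)
  with step show ?case
    unfolding k_def by blast
qed

lemma sublist_nth_pair: "Suc i < length p \<Longrightarrow> sublist [p ! i, p ! Suc i] p"
proof -
  assume "Suc i < length p"
  then have "drop i p = p ! i # p ! Suc i # drop (Suc (Suc i)) p"
    by (metis Cons_nth_drop_Suc Suc_lessD)
  then have "p = take i p @ [p ! i, p ! Suc i] @ drop (Suc (Suc i)) p"
    by (metis append_Cons append_Nil append_take_drop_id)
  then show ?thesis unfolding sublist_def by blast
qed

lemma sublist_nth_triple: "Suc (Suc i) < length p \<Longrightarrow> sublist [p ! i, p ! Suc i, p ! Suc (Suc i)] p"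
proof -
  assume "Suc (Suc i) < length p"
  then have "drop i p = p ! i # p ! Suc i # p ! Suc (Suc i) # drop (Suc (Suc (Suc i))) p"
    by (metis Cons_nth_drop_Suc Suc_lessD)
  then have "p = take i p @ [p ! i, p ! Suc i, p ! Suc (Suc i)] @ drop (Suc (Suc (Suc i))) p"
    by (metis append_Cons append_Nil append_take_drop_id)
  then show ?thesis unfolding sublist_def by blast
qed

lemma Pi_words_no_e0:
  "p \<in> Pi_words \<Longrightarrow> 1 \<le> i \<Longrightarrow> i < length p \<Longrightarrow> p ! (i - 1) = Le \<Longrightarrow> p ! i \<noteq> L0"
  using sublist_nth_pair[of "i - 1" p] unfolding Pi_words_def by auto

lemma Pi_words_no_e10:
  "p \<in> Pi_words \<Longrightarrow> 1 \<le> i \<Longrightarrow> Suc i < length p \<Longrightarrow> p ! (i - 1) = Le \<Longrightarrow> p ! i = L1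
    \<Longrightarrow> p ! Suc i \<noteq> L0"
  using sublist_nth_triple[of "i - 1" p] unfolding Pi_words_def by auto

lemma Pi_words_no_e1e:
  "p \<in> Pi_words \<Longrightarrow> 1 \<le> i \<Longrightarrow> Suc i < length p \<Longrightarrow> p ! (i - 1) = Le \<Longrightarrow> p ! i = L1
    \<Longrightarrow> p ! Suc i \<noteq> Le"
  using sublist_nth_triple[of "i - 1" p] unfolding Pi_words_def by auto

lemma Pi_words_second_not_L0: "p \<in> Pi_words \<Longrightarrow> 2 \<le> length p \<Longrightarrow> p ! 1 \<noteq> L0"
  unfolding Pi_words_def pos_def by auto

lemma ladder_eq_ladder_edges: "p \<in> Pi_words \<Longrightarrow> ladder p = ladder_edges p (length p)"
  unfolding ladder_def by (rule ladder_aux_eq_ladder_edges) (auto dest: Pi_words_no_e0)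

lemma finite_ladder: "p \<in> Pi_words \<Longrightarrow> finite (ladder p)"
  by (simp add: ladder_eq_ladder_edges ladder_edges_def lower_nbrs_def)

lemma mem_ladderE:
  assumes "p \<in> Pi_words" "e \<in> ladder p"
  obtains u k where "e = {u, Suc k}" "1 \<le> k" "k \<le> length p" "u \<in> lower_nbrs p k"
  using assms by (auto simp: ladder_eq_ladder_edges ladder_edges_def)

lemma ladder_back_fan:
  assumes P: "p \<in> Pi_words"
  shows "2 \<le> k \<Longrightarrow> k \<le> length p \<Longrightarrow> p ! (k - 1) \<noteq> Le \<Longrightarrow>
    1 \<le> ladder_back p k \<and> p ! ladder_back p k = L1 \<and>
    (\<forall>i. ladder_back p k + 2 \<le> i \<and> i \<le> k \<longrightarrow> p ! (i - 1) = L0)"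
proof (induction k rule: nat_less_induct)
  case (1 k)
  show ?case
  proof (cases "k = 2")
    case True
    have "p ! 1 \<noteq> L0" using Pi_words_second_not_L0[OF P] 1(3) True by simp
    then have "p ! 1 = L1" using 1(4) True by (cases "p ! 1") auto
    moreover have "ladder_back p 2 = 1" using \<open>p ! 1 \<noteq> L0\<close> by (simp add: numeral_2_eq_2)
    ultimately show ?thesis using True by auto
  next
    case False
    then obtain j where kj: "k = Suc (Suc j)" "1 \<le> j" using 1(2)
      by (metis One_nat_def Suc_le_D add_2_eq_Suc le_add1 le_antisym nat.inject not_less_eq_eq numeral_2_eq_2)
    show ?thesis
    proof (cases "p ! Suc j = L0")
      case True
      have "p ! j \<noteq> Le" using Pi_words_no_e0[OF P, of "Suc j"] True 1(3) kj by auto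
      then have IH: "1 \<le> ladder_back p (Suc j) \<and> p ! ladder_back p (Suc j) = L1 \<and>
          (\<forall>i. ladder_back p (Suc j) + 2 \<le> i \<and> i \<le> Suc j \<longrightarrow> p ! (i - 1) = L0)"
        using 1(1)[rule_format, of "Suc j"] kj 1(3) by auto
      have "ladder_back p k = ladder_back p (Suc j)" using True kj by simp
      moreover have "\<forall>i. ladder_back p (Suc j) + 2 \<le> i \<and> i \<le> k \<longrightarrow> p ! (i - 1) = L0"
        using IH True kj le_Suc_eq by auto
      ultimately show ?thesis using IH by auto
    next
      case False
      then show ?thesis using kj 1(4) by (cases "p ! Suc j") auto
    qed
  qed
qed

lemma no_fan_ladder_back_dist:
  assumes P: "p \<in> Pi_words" and no_fan: "\<not> (\<exists>a. fan_at p M a)"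
    and k: "2 \<le> k" "k \<le> length p" "p ! (k - 1) \<noteq> Le"
  shows "k - ladder_back p k \<le> (if pos p (ladder_back p k - 2) = Some Le then M - 2 else M - 1)"
proof (rule ccontr)
  define a where "a = ladder_back p k"
  define f where "f = (if pos p (a - 2) = Some Le then M - 1 else M)"
  assume "\<not> ?thesis"
  then have long: "a + f \<le> k" unfolding a_def f_def by (auto split: if_splits)
  have fan: "1 \<le> a" "p ! a = L1" "\<forall>i. a + 2 \<le> i \<and> i \<le> k \<longrightarrow> p ! (i - 1) = L0"
    using ladder_back_fan[OF P k] a_def by auto
  have "a < k" using ladder_back_lt[of k p] k(1) a_def by simp
  then have "pos p (a + 1) = Some L1" using fan k unfolding pos_def by auto
  moreover have "pos p (a + i) = Some L0" if "2 \<le> i" "i \<le> f" for i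
    using fan(3)[rule_format, of "a + i"] that long k unfolding pos_def by auto
  ultimately have "fan_at p M a"
    using fan(1) unfolding fan_at_def f_def by (cases "pos p (a - 2) = Some Le") auto
  with no_fan show False by blast
qed

text \<open>Lower neighbours of vertex k + 1 missing from X; when \<open>\<pi>(k) = e\<close> the nonexistent second
  neighbour counts as missing.\<close>
definition deficit :: "sym list \<Rightarrow> nat set \<Rightarrow> nat \<Rightarrow> nat" where
  "deficit p X k = of_bool (k \<notin> X) + of_bool (p ! (k - 1) = Le \<or> ladder_back p k \<notin> X)"

definition top_indices :: "sym list \<Rightarrow> nat set \<Rightarrow> nat set" where
  "top_indices p X = {k \<in> {1..length p}. Suc k \<in> X}"

definition induced_edges :: "sym list \<Rightarrow> nat set \<Rightarrow> nat set set" where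
  "induced_edges p X = {e \<in> ladder p. e \<subseteq> X}"

lemma finite_top_indices [simp]: "finite (top_indices p X)"
  by (simp add: top_indices_def)

lemma deficit_le_2: "deficit p X k \<le> 2"
  by (simp add: deficit_def)

lemma card_lower_nbrs_Int: "1 \<le> k \<Longrightarrow> card (lower_nbrs p k \<inter> X) + deficit p X k = 2"
  using ladder_back_lt[of k p] by (auto simp: lower_nbrs_def deficit_def Int_insert_left)

lemma induced_edges_eq_UN:
  assumes "p \<in> Pi_words"
  shows "induced_edges p X = (\<Union>k\<in>top_indices p X. (\<lambda>u. {u, Suc k}) ` (lower_nbrs p k \<inter> X))"
  unfolding induced_edges_def top_indices_def ladder_eq_ladder_edges[OF assms] ladder_edges_def
  by auto

lemma card_induced_edges:
  assumes "p \<in> Pi_words"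
  shows "card (induced_edges p X) + sum (deficit p X) (top_indices p X) = 2 * card (top_indices p X)"
proof -
  let ?T = "top_indices p X"
  have edge_eq: "{u, Suc k} = {u', Suc k'} \<longleftrightarrow> u = u' \<and> k = k'"
    if "u \<in> lower_nbrs p k" "u' \<in> lower_nbrs p k'" "k \<in> ?T" "k' \<in> ?T" for u u' k k'
    using that lower_nbrs_le[of k u p] lower_nbrs_le[of k' u' p]
    by (auto simp: top_indices_def doubleton_eq_iff)
  have "card (induced_edges p X) = (\<Sum>k\<in>?T. card ((\<lambda>u. {u, Suc k}) ` (lower_nbrs p k \<inter> X)))"
    unfolding induced_edges_eq_UN[OF assms]
  proof (rule card_UN_disjoint)
    show "\<forall>k\<in>?T. finite ((\<lambda>u. {u, Suc k}) ` (lower_nbrs p k \<inter> X))"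
      by (simp add: lower_nbrs_def)
    show "\<forall>k\<in>?T. \<forall>k'\<in>?T. k \<noteq> k' \<longrightarrow>
        (\<lambda>u. {u, Suc k}) ` (lower_nbrs p k \<inter> X) \<inter> (\<lambda>u. {u, Suc k'}) ` (lower_nbrs p k' \<inter> X) = {}"
      using edge_eq by blast
  qed simp
  also have "\<dots> = (\<Sum>k\<in>?T. card (lower_nbrs p k \<inter> X))"
    using edge_eq by (intro sum.cong refl card_image inj_onI) blast
  finally have "card (induced_edges p X) + sum (deficit p X) ?T
      = (\<Sum>k\<in>?T. card (lower_nbrs p k \<inter> X) + deficit p X k)"
    by (simp add: sum.distrib)
  also have "\<dots> = (\<Sum>k\<in>?T. 2)"
    by (intro sum.cong refl) (auto simp: top_indices_def card_lower_nbrs_Int)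
  finally show ?thesis by simp
qed

definition e_positions :: "sym list \<Rightarrow> nat set" where
  "e_positions p = {k \<in> {1..length p}. p ! (k - 1) = Le}"

lemma card_e_positions: "card (e_positions p) = count_list p Le"
proof -
  have "e_positions p = Suc ` {i. i < length p \<and> Le = p ! i}"
  proof (intro equalityI subsetI)
    fix k assume "k \<in> e_positions p"
    then have "k - 1 \<in> {i. i < length p \<and> Le = p ! i}" "k = Suc (k - 1)"
      by (auto simp: e_positions_def)
    then show "k \<in> Suc ` {i. i < length p \<and> Le = p ! i}" by blast
  qed (auto simp: e_positions_def)
  then have "card (e_positions p) = length (filter ((=) Le) p)"
    by (simp add: card_image length_filter_conv_card)
  then show ?thesis
    by (simp add: count_list_eq_length_filter)
qed

lemma first_above:
  fixes k m :: nat
  assumes "k < m" "P m"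
  obtains k' where "k < k'" "k' \<le> m" "P k'" "\<And>j. k < j \<Longrightarrow> j < k' \<Longrightarrow> \<not> P j"
proof -
  obtain k' where k': "k < k'" "P k'" "\<And>j. j < k' \<Longrightarrow> \<not> (k < j \<and> P j)"
    using assms exists_least_iff[of "\<lambda>j. k < j \<and> P j"] by blast
  then have "k' \<le> m" using assms not_le by blast
  with k' show thesis by (intro that) auto
qed

locale ladder_cut =
  fixes p :: "sym list" and M :: nat and X :: "nat set" and y :: nat
  assumes Pi: "p \<in> Pi_words" and no_fan: "\<not> (\<exists>a. fan_at p M a)"
    and one_in: "1 \<in> X" and top_in: "Suc (length p) \<in> X"
    and y_in: "y \<in> X" and y_nbr: "y \<in> lower_nbrs p (length p)" and y_not_e: "p ! (y - 1) \<noteq> Le"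
    and M2: "2 \<le> M"
begin

abbreviation tops :: "nat set" where
  "tops \<equiv> top_indices p X"

definition gaps :: "nat set" where
  "gaps = {k \<in> tops. k \<notin> X}"

definition broken :: "nat set" where
  "broken = {k \<in> tops. p ! (k - 1) = Le \<or> ladder_back p k \<notin> X}"

definition missing :: "nat set" where
  "missing = {d \<in> {2..length p}. d \<notin> X}"

lemma finite_gaps: "finite gaps" and finite_broken: "finite broken"
  by (simp_all add: gaps_def broken_def)

lemma sum_deficit_eq: "sum (deficit p X) tops = card gaps + card broken"
  unfolding deficit_def gaps_def broken_def by (simp add: sum.distrib Int_def del: of_bool_or_iff)

lemma card_tops_add_card_missing: "card tops + card missing = length p"
proof -
  let ?N = "{k \<in> {1..length p}. Suc k \<notin> X}"
  have "tops \<union> ?N = {1..length p}" "tops \<inter> ?N = {}"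
    unfolding top_indices_def by auto
  then have "card tops + card ?N = length p"
    using card_Un_disjoint[of tops ?N] by simp
  moreover have "missing = Suc ` ?N"
  proof (intro equalityI subsetI)
    fix d assume "d \<in> missing"
    then have "d - 1 \<in> ?N" "d = Suc (d - 1)" by (auto simp: missing_def)
    then show "d \<in> Suc ` ?N" by blast
  next
    fix d assume "d \<in> Suc ` ?N"
    then show "d \<in> missing"
      using top_in by (force simp: missing_def Suc_le_eq le_less)
  qed
  ultimately show ?thesis by (simp add: card_image)
qed

lemma later_top_with_deficit:
  assumes k: "k \<in> tops" "k < length p" "k \<notin> X" "p ! (k - 1) = Le \<or> ladder_back p k \<notin> X"
  obtains k' where "k' \<in> tops" "k < k'" "1 \<le> deficit p X k'"
proof -
  have "1 \<le> k" "Suc k \<in> X" using k(1) by (auto simp: top_indices_def)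
  obtain k' where k': "k < k'" "k' \<le> length p" "Suc k' \<in> X" "\<And>j. k < j \<Longrightarrow> j < k' \<Longrightarrow> Suc j \<notin> X"
    using first_above[of k "length p" "\<lambda>j. Suc j \<in> X"] k(2) top_in by blast
  have "1 \<le> deficit p X k'"
  proof (cases "k' = Suc k")
    case True
    have "ladder_back p k' \<notin> X"
    proof (cases "p ! k = L0")
      case True
      then have "p ! (k - 1) \<noteq> Le" using Pi_words_no_e0[OF Pi \<open>1 \<le> k\<close> k(2)] by auto
      then show ?thesis
        using k(4) \<open>k' = Suc k\<close> True ladder_back_Suc[OF \<open>1 \<le> k\<close>] by simp
    qed (use k(3) \<open>k' = Suc k\<close> ladder_back_Suc[OF \<open>1 \<le> k\<close>] in simp)
    then show ?thesis by (simp add: deficit_def)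
  next
    case False
    then have "k' \<notin> X" using k'(1) k'(4)[of "k' - 1"] by simp
    then show ?thesis by (simp add: deficit_def)
  qed
  with k' \<open>1 \<le> k\<close> show thesis by (intro that) (auto simp: top_indices_def)
qed

end

locale small_cut = ladder_cut +
  assumes small: "sum (deficit p X) tops \<le> 2"
begin

lemma deficit_le_1:
  assumes "k \<in> tops"
  shows "deficit p X k \<le> 1"
proof (rule ccontr)
  assume "\<not> ?thesis"
  then have k_out: "k \<notin> X" and back_out: "p ! (k - 1) = Le \<or> ladder_back p k \<notin> X"
    and "deficit p X k = 2"
    by (auto simp: deficit_def of_bool_def split: if_splits)
  have "k \<noteq> length p"
    using y_nbr y_in y_not_e k_out back_out by (auto simp: lower_nbrs_def split: if_splits)
  then have "k < length p" using assms by (simp add: top_indices_def)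
  then obtain k' where "k' \<in> tops" "k < k'" "1 \<le> deficit p X k'"
    using later_top_with_deficit assms k_out back_out by blast
  then have "deficit p X k + deficit p X k' \<le> sum (deficit p X) tops"
    using assms sum_mono2[of tops "{k, k'}" "deficit p X"] by simp
  then show False using small \<open>deficit p X k = 2\<close> \<open>1 \<le> deficit p X k'\<close> by simp
qed

lemma gap_props:
  assumes "k \<in> gaps"
  shows "2 \<le> k" "k \<le> length p" "Suc k \<in> X" "k \<notin> X" "p ! (k - 1) \<noteq> Le" "ladder_back p k \<in> X"
proof -
  have k: "k \<in> tops" "k \<notin> X" using assms by (auto simp: gaps_def)
  then show "k \<notin> X" "k \<le> length p" "Suc k \<in> X" by (auto simp: top_indices_def)
  show "2 \<le> k" using k one_in by (cases "k = 1") (auto simp: top_indices_def)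
  show "p ! (k - 1) \<noteq> Le" "ladder_back p k \<in> X"
    using deficit_le_1[OF k(1)] k(2) by (auto simp: deficit_def)
qed

lemma gap_length:
  assumes "k \<in> gaps"
  shows "k - ladder_back p k \<le> M - 1"
  using no_fan_ladder_back_dist[OF Pi no_fan gap_props(1,2,5)[OF assms]] by (auto split: if_splits)

lemma missing_covered:
  assumes "d \<in> missing"
  obtains k where "k \<in> gaps" "ladder_back p k < d" "d \<le> k"
proof -
  have d: "2 \<le> d" "d \<le> length p" "d \<notin> X" using assms by (auto simp: missing_def)
  obtain k where k: "d - 1 < k" "k \<le> length p" "Suc k \<in> X"
      "\<And>j. d - 1 < j \<Longrightarrow> j < k \<Longrightarrow> Suc j \<notin> X"
    by (rule first_above[of "d - 1" "length p" "\<lambda>j. Suc j \<in> X"]) (use d top_in in auto)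
  have out: "i \<notin> X" if "d \<le> i" "i \<le> k" for i
    using d(1,3) k(4)[of "i - 1"] that by (cases "i = d") auto
  have "k \<in> gaps" using k d out[of k] by (auto simp: gaps_def top_indices_def)
  moreover have "ladder_back p k < d"
    using gap_props(6)[OF \<open>k \<in> gaps\<close>] out[of "ladder_back p k"] ladder_back_lt[of k p] k(1)
    by fastforce
  ultimately show thesis using k(1) d(1) by (intro that) auto
qed

lemma card_missing_le_sum: "card missing \<le> (\<Sum>k\<in>gaps. k - ladder_back p k)"
proof -
  have "missing \<subseteq> (\<Union>k\<in>gaps. {Suc (ladder_back p k)..k})"
    by (auto elim!: missing_covered)
  then have "card missing \<le> card (\<Union>k\<in>gaps. {Suc (ladder_back p k)..k})"
    by (intro card_mono) (auto simp: finite_gaps)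
  also have "\<dots> \<le> (\<Sum>k\<in>gaps. card {Suc (ladder_back p k)..k})"
    by (rule card_UN_le[OF finite_gaps])
  finally show ?thesis by simp
qed

lemma card_missing_le: "card missing \<le> (M - 1) * card gaps"
  using card_missing_le_sum sum_bounded_above[of gaps "\<lambda>k. k - ladder_back p k" "M - 1"] gap_length
  by (simp add: mult.commute)

lemma e_gap_next:
  assumes a: "a \<in> e_positions p" "Suc a \<notin> X"
  shows "Suc a \<in> gaps" "ladder_back p (Suc a) = a" "p ! a = L1"
proof -
  have a': "1 \<le> a" "a \<le> length p" "p ! (a - 1) = Le" using a(1) by (auto simp: e_positions_def)
  have "Suc a \<noteq> Suc (length p)" using a(2) top_in by auto
  then have "Suc a \<in> missing" using a' a(2) by (auto simp: missing_def)
  then obtain k where k: "k \<in> gaps" "ladder_back p k < Suc a" "Suc a \<le> k"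
    by (rule missing_covered)
  note g = gap_props[OF k(1)]
  have fan: "p ! ladder_back p k = L1" "\<And>i. ladder_back p k + 2 \<le> i \<Longrightarrow> i \<le> k \<Longrightarrow> p ! (i - 1) = L0"
    using ladder_back_fan[OF Pi g(1,2,5)] by auto
  have apex: "ladder_back p k = a"
  proof (rule ccontr)
    assume "ladder_back p k \<noteq> a"
    then consider "ladder_back p k + 1 = a" | "ladder_back p k + 2 \<le> a" using k(2) by linarith
    then show False
    proof cases
      case 1
      then show False using fan(1) a'(3) by auto
    next
      case 2
      then show False using fan(2)[of a] k(3) a'(3) by simp
    qed
  qed
  show "p ! a = L1" using fan(1) apex by simp
  have "k = Suc a"
  proof (rule ccontr)
    assume "k \<noteq> Suc a"
    then have "p ! Suc a = L0" using fan(2)[of "Suc (Suc a)"] k(3) apex by simp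
    moreover have "p ! Suc a \<noteq> L0"
      using Pi_words_no_e10[OF Pi a'(1)] \<open>k \<noteq> Suc a\<close> k(3) g(2) a'(3) fan(1) apex by simp
    ultimately show False by simp
  qed
  then show "Suc a \<in> gaps" "ladder_back p (Suc a) = a" using k(1) apex by simp_all
qed

lemma e_gap_next_next:
  assumes a: "a \<in> e_positions p" "Suc a \<notin> X"
  shows "a \<in> X" "Suc (Suc a) \<le> length p" "p ! Suc a = L1" "ladder_back p (Suc (Suc a)) = Suc a"
proof -
  have a': "1 \<le> a" "p ! (a - 1) = Le" using a(1) by (auto simp: e_positions_def)
  note succ = e_gap_next[OF a]
  show "a \<in> X" using gap_props(6)[OF succ(1)] succ(2) by simp
  show len: "Suc (Suc a) \<le> length p"
  proof (rule ccontr)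
    assume "\<not> ?thesis"
    then have "length p = Suc a" using gap_props(2)[OF succ(1)] by simp
    then have "y = Suc a \<or> y = a" using y_nbr succ by (simp add: lower_nbrs_def)
    then show False using y_in y_not_e a(2) a'(2) by auto
  qed
  have "p ! Suc a \<noteq> L0" "p ! Suc a \<noteq> Le"
    using Pi_words_no_e10[OF Pi a'(1)] Pi_words_no_e1e[OF Pi a'(1)] len a'(2) succ(3) by simp_all
  then show "p ! Suc a = L1" by (cases "p ! Suc a") auto
  then show "ladder_back p (Suc (Suc a)) = Suc a" by simp
qed

lemma e_positions_eq_singleton:
  assumes a: "a \<in> e_positions p" "Suc a \<notin> X"
    and no_broken_e: "broken \<inter> e_positions p = {}"
    and other_gaps: "\<And>k. k \<in> gaps \<Longrightarrow> k \<noteq> Suc a \<Longrightarrow> p ! (ladder_back p k - 1) \<noteq> Le"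
  shows "e_positions p = {a}"
proof -
  have "a' = a" if "a' \<in> e_positions p" for a'
  proof (cases "Suc a' \<in> X")
    case True
    then have "a' \<in> broken" using that by (auto simp: broken_def top_indices_def e_positions_def)
    then show ?thesis using no_broken_e that by blast
  next
    case False
    show ?thesis
      using other_gaps[OF e_gap_next(1)[OF that False]] e_gap_next(2)[OF that False] that
      by (force simp: e_positions_def)
  qed
  then show ?thesis using a(1) by blast
qed

lemma e_gap_closed:
  assumes a: "a \<in> e_positions p" "Suc a \<notin> X" and closed: "Suc (Suc (Suc a)) \<in> X"
  shows "gaps = {Suc a}" "broken = {Suc (Suc a)}"
proof -
  note nn = e_gap_next_next[OF a]
  have "Suc (Suc a) \<in> broken"
    using nn(2,4) closed a(2) by (auto simp: broken_def top_indices_def)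
  moreover have "Suc a \<in> gaps" by (rule e_gap_next(1)[OF a])
  ultimately have "0 < card gaps" "0 < card broken"
    using finite_gaps finite_broken by (auto simp: card_gt_0_iff)
  then have "card gaps = 1" "card broken = 1" using small sum_deficit_eq by linarith+
  with \<open>Suc a \<in> gaps\<close> \<open>Suc (Suc a) \<in> broken\<close> show "gaps = {Suc a}" "broken = {Suc (Suc a)}"
    by (metis card_1_singletonE singletonD)+
qed

lemma e_gap_open:
  assumes a: "a \<in> e_positions p" "Suc a \<notin> X" and unclosed: "Suc (Suc (Suc a)) \<notin> X"
  obtains k where "gaps = {Suc a, k}" "broken = {}" "ladder_back p k = Suc (Suc a)"
    "k - ladder_back p k \<le> M - 2"
proof -
  note nn = e_gap_next_next[OF a]
  have "Suc (Suc (Suc a)) \<noteq> Suc (length p)" using unclosed top_in by auto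
  then have "Suc (Suc (Suc a)) \<in> missing" using nn(2) unclosed by (auto simp: missing_def)
  then obtain k where k: "k \<in> gaps" "ladder_back p k < Suc (Suc (Suc a))" "Suc (Suc (Suc a)) \<le> k"
    by (rule missing_covered)
  have sub: "{Suc a, k} \<subseteq> gaps" using k(1) e_gap_next(1)[OF a] by simp
  then have "2 \<le> card gaps" using k(3) card_mono[OF finite_gaps sub] by simp
  then have "card gaps = 2" "card broken = 0" using small sum_deficit_eq by linarith+
  then have gaps: "gaps = {Suc a, k}" and broken: "broken = {}"
    using card_subset_eq[OF finite_gaps sub] k(3) finite_broken by simp_all
  note g = gap_props[OF k(1)]
  have fan: "\<And>i. ladder_back p k + 2 \<le> i \<Longrightarrow> i \<le> k \<Longrightarrow> p ! (i - 1) = L0"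
    using ladder_back_fan[OF Pi g(1,2,5)] by auto
  have "\<not> ladder_back p k \<le> a" using fan[of "Suc (Suc a)"] k(3) nn(3) by fastforce
  moreover have "ladder_back p k \<noteq> Suc a" using g(6) a(2) by auto
  ultimately have apex: "ladder_back p k = Suc (Suc a)" using k(2) by simp
  have "pos p (ladder_back p k - 2) = Some Le"
    using apex a(1) by (auto simp: e_positions_def pos_def)
  then have "k - ladder_back p k \<le> M - 2"
    using no_fan_ladder_back_dist[OF Pi no_fan g(1,2,5)] by simp
  with gaps broken apex show thesis by (rule that)
qed

text \<open>A position of the letter e whose successor vertex is missing from X forces all of the
  (at most two) units of deficit to be spent near it.\<close>
lemma e_gap_bound:
  assumes a: "a \<in> e_positions p" "Suc a \<notin> X"
  shows "card missing + (M - 1) * card (e_positions p) \<le> (M - 1) * sum (deficit p X) tops"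
proof -
  note nn = e_gap_next_next[OF a]
  have "e_positions p = {a} \<and> card missing \<le> M - 1 \<and> sum (deficit p X) tops = 2"
  proof (cases "Suc (Suc (Suc a)) \<in> X")
    case True
    note gb = e_gap_closed[OF a True]
    have "e_positions p = {a}"
      using e_positions_eq_singleton[OF a] gb nn(3) by (auto simp: e_positions_def)
    moreover have "card missing \<le> 1"
      using card_missing_le_sum gb(1) e_gap_next(2)[OF a] by simp
    ultimately show ?thesis using M2 sum_deficit_eq gb by simp
  next
    case False
    then obtain k where gb: "gaps = {Suc a, k}" "broken = {}" "ladder_back p k = Suc (Suc a)"
        "k - ladder_back p k \<le> M - 2"
      by (rule e_gap_open[OF a])
    have "k \<noteq> Suc a" using gb(3) e_gap_next(2)[OF a] by auto
    have "e_positions p = {a}"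
      using e_positions_eq_singleton[OF a] gb(1-3) nn(3) by auto
    moreover have "card missing \<le> 1 + (M - 2)"
      using card_missing_le_sum gb e_gap_next(2)[OF a] \<open>k \<noteq> Suc a\<close> by simp
    ultimately show ?thesis using M2 sum_deficit_eq gb \<open>k \<noteq> Suc a\<close> by simp
  qed
  then show ?thesis by simp
qed

lemma missing_plus_e_bound:
  "card missing + (M - 1) * card (e_positions p) \<le> (M - 1) * sum (deficit p X) tops"
proof (cases "\<exists>a \<in> e_positions p. Suc a \<notin> X")
  case True
  then show ?thesis using e_gap_bound by blast
next
  case False
  then have "e_positions p \<subseteq> broken" by (auto simp: broken_def top_indices_def e_positions_def)
  then have "(M - 1) * card (e_positions p) \<le> (M - 1) * card broken"
    by (intro mult_le_mono2 card_mono finite_broken)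
  with card_missing_le show ?thesis
    unfolding sum_deficit_eq add_mult_distrib2 by linarith
qed

end

context ladder_cut
begin

lemma tops_deficit_bound:
  assumes "length p + (M - 1) * count_list p Le = 3 * M - 1"
  shows "3 * M - 1 \<le> card tops + (M - 1) * sum (deficit p X) tops"
proof (cases "sum (deficit p X) tops \<le> 2")
  case True
  then interpret small_cut p M X y by unfold_locales
  show ?thesis
    using missing_plus_e_bound[unfolded card_e_positions] card_tops_add_card_missing assms by linarith
next
  case False
  have "sum (deficit p X) tops \<le> 2 * card tops"
    using sum_bounded_above[of tops "deficit p X" 2] deficit_le_2 by (simp add: mult.commute)
  then have "2 \<le> card tops" using False by linarith
  moreover have "(M - 1) * 3 \<le> (M - 1) * sum (deficit p X) tops"
    using False by (intro mult_le_mono2) simp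
  ultimately show ?thesis using M2 by linarith
qed

text \<open>The density bound \<open>(e - 1)/(s - 2) \<le> (2M - 1)/(M - 1)\<close> with denominators cleared, for the
  subgraph induced by X with e edges and s + 2 vertices; the \<open>- 1\<close> discounts the edge yz.\<close>
lemma induced_edges_bound:
  assumes "length p + (M - 1) * count_list p Le = 3 * M - 1"
  shows "(real (card (induced_edges p X)) - 1) * (real M - 1) \<le> (2 * real M - 1) * (real (card tops) - 2)"
proof -
  let ?e = "real (card (induced_edges p X))" and ?s = "real (card tops)"
    and ?l = "real (sum (deficit p X) tops)"
  have e: "?e = 2 * ?s - ?l"
    using arg_cong[OF card_induced_edges[OF Pi, of X], of real] by simp
  have "real (3 * M - 1) \<le> ?s + real (M - 1) * ?l"
    using tops_deficit_bound[OF assms] by (metis of_nat_add of_nat_mono of_nat_mult)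
  then have "3 * real M - 1 \<le> ?s + (real M - 1) * ?l"
    using M2 by (simp add: of_nat_diff)
  moreover have "(?e - 1) * (real M - 1) - (2 * real M - 1) * (?s - 2)
      = 3 * real M - 1 - (?s + (real M - 1) * ?l)"
    unfolding e by (simp add: algebra_simps)
  ultimately show ?thesis by linarith
qed

end

lemma card_ladder:
  assumes "p \<in> Pi_words"
  shows "card (ladder p) + count_list p Le = 2 * length p"
proof -
  let ?V = "{0..Suc (length p)}"
  have "e \<subseteq> ?V" if "e \<in> ladder p" for e
    using that by (auto elim!: mem_ladderE[OF assms] dest!: lower_nbrs_le)
  then have "induced_edges p ?V = ladder p"
    unfolding induced_edges_def by blast
  moreover have tops: "top_indices p ?V = {1..length p}" by (auto simp: top_indices_def)
  moreover have "sum (deficit p ?V) {1..length p} = card (e_positions p)"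
  proof -
    have "ladder_back p k \<in> ?V" if "k \<in> {1..length p}" for k
      using ladder_back_lt[of k p] that by auto
    then have "sum (deficit p ?V) {1..length p} = (\<Sum>k\<in>{1..length p}. of_bool (p ! (k - 1) = Le))"
      by (intro sum.cong refl) (auto simp: deficit_def)
    then show ?thesis by (simp add: e_positions_def Int_def)
  qed
  ultimately show ?thesis
    using card_induced_edges[OF assms, of ?V] card_e_positions by simp
qed

lemma card_eq_card_top_indices:
  assumes "X \<subseteq> {0..Suc (length p)}" "0 \<in> X" "1 \<in> X"
  shows "card X = card (top_indices p X) + 2"
proof -
  have X: "X = insert 0 (insert 1 (Suc ` top_indices p X))"
  proof (intro equalityI subsetI)
    fix v assume "v \<in> X"
    show "v \<in> insert 0 (insert 1 (Suc ` top_indices p X))"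
    proof (cases "v \<le> 1")
      case False
      then have "v - 1 \<in> top_indices p X" "v = Suc (v - 1)"
        using \<open>v \<in> X\<close> assms(1) by (auto simp: top_indices_def)
      then show ?thesis by blast
    qed auto
  qed (use assms in \<open>auto simp: top_indices_def\<close>)
  have "card (insert 0 (insert 1 (Suc ` top_indices p X))) = card (top_indices p X) + 2"
    by (simp add: card_image top_indices_def image_iff)
  with X show ?thesis by (metis (no_types))
qed


locale outer_edge =
  fixes M y z :: nat and \<pi> :: "sym list"
  assumes M2: "2 \<le> M" and in_B: "\<pi> \<in> B_set M" and outer: "outer_boundary_edge M \<pi> y z"
begin

lemma Pi: "\<pi> \<in> Pi_words" and no_fan: "\<not> (\<exists>a. fan_at \<pi> M a)"
  using in_B by (simp_all add: B_set_def)

lemma yz_edge: "{y, z} \<in> ladder \<pi>" and y_pos: "0 < y" and z_eq: "z = Suc (length \<pi>)"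
  and y_le: "y \<le> length \<pi>" and y_not_e: "\<pi> ! (y - 1) \<noteq> Le"
proof -
  have "{y, z} \<in> ladder \<pi>" "0 < y" "y < z" "pos \<pi> y \<noteq> Some Le" "z = length \<pi> + 1"
    using outer unfolding outer_boundary_edge_def boundary_edge_def by blast+
  then show "{y, z} \<in> ladder \<pi>" "0 < y" "z = Suc (length \<pi>)" "y \<le> length \<pi>" "\<pi> ! (y - 1) \<noteq> Le"
    by (auto simp: pos_def)
qed

lemma length_eq: "length \<pi> + (M - 1) * count_list \<pi> Le = 3 * M - 1"
  and length_ge: "M + 1 \<le> length \<pi>"
proof -
  have "count_list \<pi> Le \<le> 2" using Pi by (simp add: Pi_words_def)
  then consider "count_list \<pi> Le = 0" | "count_list \<pi> Le = 1" | "count_list \<pi> Le = 2" by linarith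
  moreover have "length \<pi> = (if count_list \<pi> Le = 0 then 3 * M - 1
      else if count_list \<pi> Le = 1 then 2 * M else M + 1)"
    using outer unfolding outer_boundary_edge_def by blast
  ultimately show "length \<pi> + (M - 1) * count_list \<pi> Le = 3 * M - 1" "M + 1 \<le> length \<pi>"
    using M2 by (cases; simp)+
qed

lemma y_nbr: "y \<in> lower_nbrs \<pi> (length \<pi>)"
proof -
  obtain u k where uk: "{y, z} = {u, Suc k}" "1 \<le> k" "k \<le> length \<pi>" "u \<in> lower_nbrs \<pi> k"
    using mem_ladderE[OF Pi yz_edge] by blast
  moreover have "u \<noteq> z" using lower_nbrs_le[OF uk(2,4)] uk(3) z_eq by simp
  ultimately show ?thesis using z_eq by (auto simp: doubleton_eq_iff)
qed

lemma induced_edges_bound: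
  assumes "bw_I y z \<subseteq> X"
  shows "(real (card (induced_edges \<pi> X)) - 1) * (real M - 1)
    \<le> (2 * real M - 1) * (real (card (top_indices \<pi> X)) - 2)"
proof -
  interpret ladder_cut \<pi> M X y
    using assms Pi no_fan y_nbr y_not_e M2 z_eq by unfold_locales (auto simp: bw_I_def)
  show ?thesis by (rule induced_edges_bound[OF length_eq])
qed

lemma yz_induced: "bw_I y z \<subseteq> X \<Longrightarrow> {y, z} \<in> induced_edges \<pi> X"
  using yz_edge by (auto simp: induced_edges_def bw_I_def)

lemma finite_induced_edges: "finite (induced_edges \<pi> X)"
  using finite_ladder[OF Pi] by (simp add: induced_edges_def)

lemma card_induced_edges_ge_1: "bw_I y z \<subseteq> X \<Longrightarrow> 1 \<le> card (induced_edges \<pi> X)"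
  using yz_induced finite_induced_edges by (auto simp: Suc_le_eq card_gt_0_iff)

lemma y_ge_2: "2 \<le> y"
proof (rule ccontr)
  assume "\<not> 2 \<le> y"
  then have "y = 1" using y_pos by simp
  then have "top_indices \<pi> (bw_I y z) = {length \<pi>}"
    unfolding top_indices_def bw_I_def z_eq using length_ge by auto
  then have "card (top_indices \<pi> (bw_I y z)) = 1" by simp
  moreover have "1 \<le> card (induced_edges \<pi> (bw_I y z))"
    by (rule card_induced_edges_ge_1) simp
  then have "0 \<le> (real (card (induced_edges \<pi> (bw_I y z))) - 1) * (real M - 1)"
    using M2 by simp
  ultimately show False
    using induced_edges_bound[of "bw_I y z"] M2 by simp
qed

lemma induced_edges_bw_I: "induced_edges \<pi> (bw_I y z) = {{y, z}}"
proof -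
  let ?E = "induced_edges \<pi> (bw_I y z)"
  have "top_indices \<pi> (bw_I y z) = {y - 1, length \<pi>}"
    unfolding top_indices_def bw_I_def z_eq using y_ge_2 y_le by auto
  then have "card (top_indices \<pi> (bw_I y z)) = 2" using y_ge_2 y_le by simp
  then have "(real (card ?E) - 1) * (real M - 1) \<le> 0"
    using induced_edges_bound[of "bw_I y z"] by simp
  then have "card ?E \<le> 1" using M2 by (simp add: mult_le_0_iff)
  then show ?thesis
    using yz_induced[of "bw_I y z"] finite_induced_edges card_le_Suc0_iff_eq[of ?E] by auto
qed

lemma bw_E_eq: "bw_E \<pi> y z = ladder \<pi> - {{y, z}}"
  using induced_edges_bw_I unfolding bw_E_def induced_edges_def by blast

lemma card_bw_I: "card (bw_I y z) = 4"
  using y_ge_2 y_le z_eq by (cases \<pi>) (auto simp: bw_I_def card_insert_if)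

lemma bw_I_subset: "bw_I y z \<subseteq> ladder_vertices \<pi>"
  using y_le z_eq by (auto simp: bw_I_def ladder_vertices_def)

lemma density_backward_extension:
  "density (ladder_vertices \<pi>) (bw_E \<pi> y z) (bw_I y z) = (2 * real M - 1) / (real M - 1)"
proof -
  let ?n = "real (length \<pi>)" and ?c = "real (count_list \<pi> Le)"
  have "card (bw_E \<pi> y z) + 1 = card (ladder \<pi>)"
    using card_Suc_Diff1[OF finite_ladder[OF Pi] yz_edge] by (simp add: bw_E_eq)
  then have edges: "real (card (bw_E \<pi> y z)) = 2 * ?n - ?c - 1"
    using arg_cong[OF card_ladder[OF Pi], of real] by simp
  have "real (length \<pi> + (M - 1) * count_list \<pi> Le) = real (3 * M - 1)"
    by (simp only: length_eq)
  then have len: "?n + (real M - 1) * ?c = 3 * real M - 1"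
    using M2 by (simp add: of_nat_diff)
  have "density (ladder_vertices \<pi>) (bw_E \<pi> y z) (bw_I y z) = (2 * ?n - ?c - 1) / (?n - 2)"
    unfolding density_def edges by (simp add: ladder_vertices_def card_bw_I)
  also have "\<dots> = (2 * real M - 1) / (real M - 1)"
  proof (rule iffD2[OF frac_eq_eq])
    show "?n - 2 \<noteq> 0" "real M - 1 \<noteq> 0" using length_ge M2 by simp_all
    have "(2 * ?n - ?c - 1) * (real M - 1) - (2 * real M - 1) * (?n - 2)
        = 3 * real M - 1 - (?n + (real M - 1) * ?c)"
      by (simp add: algebra_simps)
    then show "(2 * ?n - ?c - 1) * (real M - 1) = (2 * real M - 1) * (?n - 2)"
      using len by simp
  qed
  finally show ?thesis .
qed

lemma subext_density_le:
  assumes "subext VK EK (bw_I y z) (ladder_vertices \<pi>) (bw_E \<pi> y z) (bw_I y z)"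
  shows "density VK EK (bw_I y z) \<le> (2 * real M - 1) / (real M - 1)"
proof -
  let ?T = "top_indices \<pi> VK" and ?E = "induced_edges \<pi> VK"
  have ext: "ext_graph VK EK (bw_I y z)" and VK: "VK \<subseteq> ladder_vertices \<pi>"
    and EK: "EK \<subseteq> bw_E \<pi> y z"
    using assms by (auto simp: subext_def)
  have I: "bw_I y z \<subseteq> VK" using ext by (simp add: ext_graph_def)
  have "EK \<subseteq> ?E - {{y, z}}"
    using EK ext by (fastforce simp: ext_graph_def bw_E_eq induced_edges_def)
  then have "card EK \<le> card ?E - 1"
    using card_mono[OF _ \<open>EK \<subseteq> ?E - {{y, z}}\<close>] finite_induced_edges yz_induced[OF I] by simp
  then have EK_le: "real (card EK) \<le> real (card ?E) - 1"
    using card_induced_edges_ge_1[OF I] by linarith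
  have "card VK = card ?T + 2"
    by (rule card_eq_card_top_indices) (use VK I in \<open>auto simp: ladder_vertices_def bw_I_def\<close>)
  then have dens: "density VK EK (bw_I y z) = real (card EK) / (real (card ?T) - 2)"
    by (simp add: density_def card_bw_I)
  have bound: "(real (card ?E) - 1) * (real M - 1) \<le> (2 * real M - 1) * (real (card ?T) - 2)"
    by (rule induced_edges_bound[OF I])
  show ?thesis
  proof (cases "card ?T \<le> 2")
    case True
    then have "(2 * real M - 1) * (real (card ?T) - 2) \<le> 0"
      using M2 by (intro mult_nonneg_nonpos) auto
    then have "(real (card ?E) - 1) * (real M - 1) \<le> 0" using bound by linarith
    then have "real (card ?E) - 1 \<le> 0" using M2 by (simp add: mult_le_0_iff)
    then have "card EK = 0" using EK_le by linarith
    then show ?thesis using dens M2 by simp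
  next
    case False
    then have pos: "real (card ?T) - 2 > 0" "real M - 1 > 0" using M2 by simp_all
    have "real (card EK) * (real M - 1) \<le> (real (card ?E) - 1) * (real M - 1)"
      using EK_le pos by (intro mult_right_mono) auto
    with bound have "real (card EK) * (real M - 1) \<le> (2 * real M - 1) * (real (card ?T) - 2)"
      by linarith
    then show ?thesis
      unfolding dens using pos by (simp add: divide_le_eq le_divide_eq mult.commute)
  qed
qed

lemma ext_graph_backward_extension:
  "ext_graph (ladder_vertices \<pi>) (bw_E \<pi> y z) (bw_I y z)"
  unfolding ext_graph_def
proof (intro conjI ballI)
  fix e assume "e \<in> bw_E \<pi> y z"
  then have "e \<in> ladder \<pi>" by (simp add: bw_E_def)
  then obtain u k where "e = {u, Suc k}" "1 \<le> k" "k \<le> length \<pi>" "u \<in> lower_nbrs \<pi> k"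
    by (rule mem_ladderE[OF Pi])
  moreover from this(2,4) have "u \<le> k" by (rule lower_nbrs_le)
  ultimately show "\<exists>u v. e = {u, v} \<and> u \<noteq> v \<and> u \<in> ladder_vertices \<pi> \<and> v \<in> ladder_vertices \<pi>"
    by (intro exI[of _ u] exI[of _ "Suc k"]) (auto simp: ladder_vertices_def)
qed (use bw_I_subset in \<open>auto simp: ladder_vertices_def bw_E_def\<close>)

theorem backward_extension_balanced: "balanced (ladder_vertices \<pi>) (bw_E \<pi> y z) (bw_I y z)"
  using ext_graph_backward_extension subext_density_le density_backward_extension
  by (simp add: balanced_def)

end

theorem lemma4p9:
  fixes M y z :: nat and \<pi> :: "sym list"
  assumes "M \<ge> 3" and "\<pi> \<in> B_set M" and "outer_boundary_edge M \<pi> y z"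
  shows "balanced (ladder_vertices \<pi>) (bw_E \<pi> y z) (bw_I y z)"
proof -
  interpret outer_edge M y z \<pi>
    using assms by unfold_locales simp_all
  show ?thesis by (rule backward_extension_balanced)
qed

end
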